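(* Let $G$ and $H$ be two vertex-disjoint graphs, considered as starting positions of the Maker-Breaker domination game, and let $G\bowtie H$ denote their join (the union of $G$ and $H$ together with all edges $uv$ with $u\in V(G)$, $v\in V(H)$). (i) If $G=K_1$ and $o(H)=\mathcal S$ (or $H=K_1$ and $o(G)=\mathcal S$), then $o(G\bowtie H)=\mathcal N$. (ii) Otherwise, $o(G\bowtie H)=\mathcal D$.
   Context: The Maker-Breaker domination game on a graph: Dominator and Staller alternately choose a not-yet-chosen vertex (no passing), starting with all vertices unchosen; when all vertices are chosen, Dominator wins if his vertices form a dominating set of the graph, otherwise Staller wins. The outcome $o(\cdot)$ is $\mathcal D$ if Dominator has a winning strategy both as first and as second player, $\mathcal S$ if Staller has a winning strategy both as first and as second player, and $\mathcal N$ if the first player has a winning strategy; every graph has one of these three outcomes. $K_1$ is the graph with a single vertex. *)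

theory Defs
  imports Main
begin

definition graph :: "'a set \<Rightarrow> ('a \<Rightarrow> 'a \<Rightarrow> bool) \<Rightarrow> bool" where
  "graph V E \<longleftrightarrow> finite V \<and> (\<forall>u v. E u v \<longrightarrow> u \<in> V \<and> v \<in> V)
     \<and> (\<forall>u v. E u v \<longrightarrow> E v u) \<and> (\<forall>v. \<not> E v v)"

definition dominating :: "'a set \<Rightarrow> ('a \<Rightarrow> 'a \<Rightarrow> bool) \<Rightarrow> 'a set \<Rightarrow> bool" where
  "dominating V E D \<longleftrightarrow> D \<subseteq> V \<and> (\<forall>v\<in>V. v \<in> D \<or> (\<exists>u\<in>D. E u v))"

text \<open>dom_wins V E D S b: in the position where Dominator has chosen D and
Staller has chosen S, with Dominator to move iff b, Dominator has a winning
strategy in the Maker-Breaker domination game (no passing).\<close>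
inductive dom_wins :: "'a set \<Rightarrow> ('a \<Rightarrow> 'a \<Rightarrow> bool) \<Rightarrow> 'a set \<Rightarrow> 'a set \<Rightarrow> bool \<Rightarrow> bool"
  for V E where
  finished: "V - (D \<union> S) = {} \<Longrightarrow> dominating V E D \<Longrightarrow> dom_wins V E D S b"
| dom_move: "v \<in> V - (D \<union> S) \<Longrightarrow> dom_wins V E (insert v D) S False \<Longrightarrow> dom_wins V E D S True"
| stall_move: "V - (D \<union> S) \<noteq> {} \<Longrightarrow> (\<forall>v\<in>V - (D \<union> S). dom_wins V E D (insert v S) True)
      \<Longrightarrow> dom_wins V E D S False"

definition outcome_D :: "'a set \<Rightarrow> ('a \<Rightarrow> 'a \<Rightarrow> bool) \<Rightarrow> bool" where
  "outcome_D V E \<longleftrightarrow> dom_wins V E {} {} True \<and> dom_wins V E {} {} False"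

definition outcome_S :: "'a set \<Rightarrow> ('a \<Rightarrow> 'a \<Rightarrow> bool) \<Rightarrow> bool" where
  "outcome_S V E \<longleftrightarrow> \<not> dom_wins V E {} {} True \<and> \<not> dom_wins V E {} {} False"

definition outcome_N :: "'a set \<Rightarrow> ('a \<Rightarrow> 'a \<Rightarrow> bool) \<Rightarrow> bool" where
  "outcome_N V E \<longleftrightarrow> dom_wins V E {} {} True \<and> \<not> dom_wins V E {} {} False"

definition join_edges :: "'a set \<Rightarrow> ('a \<Rightarrow> 'a \<Rightarrow> bool) \<Rightarrow> 'a set \<Rightarrow> ('a \<Rightarrow> 'a \<Rightarrow> bool)
    \<Rightarrow> 'a \<Rightarrow> 'a \<Rightarrow> bool" where
  "join_edges V1 E1 V2 E2 u v \<longleftrightarrow> E1 u v \<or> E2 u v \<or> (u \<in> V1 \<and> v \<in> V2) \<or> (u \<in> V2 \<and> v \<in> V1)"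

end

theory Submission
  imports Defs
begin

text \<open>If both graphs have at least two vertices, any set containing a vertex of each of them
dominates the join. Dominator can claim such a set: call a side safe if he already owns a vertex
there or Staller has not entered it yet. Whenever Staller enters a side that is not yet secured,
that side still has a free vertex, because it has at least two vertices, and Dominator answers
there, so after each of his moves both sides are safe again.

If one graph is a single vertex x, then x is adjacent to every other vertex of the join.
Dominator, moving first, wins by claiming x; moving second, he also wins by claiming x unless
Staller takes x at once. After that the game is exactly the game on the other graph H with
Dominator to move, since any vertex of H dominates x. So the join is a second-player win for
Dominator iff H is a first-player win for him, which (moving first never hurts Dominator) means
iff o(H) is not S.\<close>

lemma dom_wins_by_invariant:
  assumes "finite V"
    and final: "\<And>D S b. P D S b \<Longrightarrow> V - (D \<union> S) = {} \<Longrightarrow> dominating V E D"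
    and dominator: "\<And>D S. P D S True \<Longrightarrow> V - (D \<union> S) \<noteq> {}
      \<Longrightarrow> \<exists>v\<in>V - (D \<union> S). P (insert v D) S False"
    and staller: "\<And>D S v. P D S False \<Longrightarrow> v \<in> V - (D \<union> S) \<Longrightarrow> P D (insert v S) True"
    and "P D S b"
  shows "dom_wins V E D S b"
  using \<open>P D S b\<close>
proof (induction "card (V - (D \<union> S))" arbitrary: D S b rule: less_induct)
  case less
  have fewer: "card (V - (D \<union> S) - {v}) < card (V - (D \<union> S))" if "v \<in> V - (D \<union> S)" for v
    using that \<open>finite V\<close> by (intro card_Diff1_less) auto
  show ?case
  proof (cases "V - (D \<union> S) = {}")
    case True
    with final less.prems show ?thesis by (blast intro: dom_wins.finished)
  next
    case free: False
    show ?thesis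
    proof (cases b)
      case True
      with dominator[of D S] less.prems free obtain v
        where v: "v \<in> V - (D \<union> S)" and inv: "P (insert v D) S False" by auto
      have "dom_wins V E (insert v D) S False"
      proof (rule less.hyps)
        have "V - (insert v D \<union> S) = V - (D \<union> S) - {v}" by blast
        with fewer[OF v] show "card (V - (insert v D \<union> S)) < card (V - (D \<union> S))" by simp
      qed (fact inv)
      with True show ?thesis by (simp add: dom_wins.dom_move[OF v])
    next
      case False
      have "dom_wins V E D (insert v S) True" if v: "v \<in> V - (D \<union> S)" for v
      proof (rule less.hyps)
        have "V - (D \<union> insert v S) = V - (D \<union> S) - {v}" by blast
        with fewer[OF v] show "card (V - (D \<union> insert v S)) < card (V - (D \<union> S))" by simp
        show "P D (insert v S) True" using staller[OF _ v] less.prems False by simp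
      qed
      with False show ?thesis by (simp add: dom_wins.stall_move[OF free])
    qed
  qed
qed

lemma dominating_superset:
  "dominating V E D\<^sub>0 \<Longrightarrow> D\<^sub>0 \<subseteq> D \<Longrightarrow> D \<subseteq> V \<Longrightarrow> dominating V E D"
  unfolding dominating_def by blast

lemma dom_wins_if_contains_dominating:
  assumes "finite V" "dominating V E D\<^sub>0" "D\<^sub>0 \<subseteq> D" "D \<subseteq> V"
  shows "dom_wins V E D S b"
  by (rule dom_wins_by_invariant[where P="\<lambda>D S b. D\<^sub>0 \<subseteq> D \<and> D \<subseteq> V"])
    (use assms dominating_superset in blast)+

lemma dom_wins_imp_dominating: "dom_wins V E D S b \<Longrightarrow> V - (D \<union> S) = {} \<Longrightarrow> dominating V E D"
  by (erule dom_wins.cases) auto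

text \<open>Neither an extra vertex nor the first move can hurt Dominator. The two claims are proved
simultaneously because each case of the induction for one of them needs the other.\<close>

lemma dom_wins_insert_and_move_first:
  assumes "dom_wins V E D S b"
  shows "(\<forall>v\<in>V - (D \<union> S). dom_wins V E (insert v D) S b) \<and> (\<not> b \<longrightarrow> dom_wins V E D S True)"
  using assms
proof (induction rule: dom_wins.induct)
  case (finished D S b)
  then show ?case by (auto intro: dom_wins.finished)
next
  case (dom_move w D S)
  have "dom_wins V E (insert v D) S True" if v: "v \<in> V - (D \<union> S)" for v
  proof (cases "v = w")
    case True
    with dom_move.IH show ?thesis by simp
  next
    case False
    with dom_move.IH v have "dom_wins V E (insert w (insert v D)) S False"
      by (simp add: insert_commute)
    with dom_move.hyps False show ?thesis by (intro dom_wins.dom_move[of w]) auto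
  qed
  then show ?case by simp
next
  case (stall_move D S)
  have after_v: "dom_wins V E (insert v D) S False" if v: "v \<in> V - (D \<union> S)" for v
  proof (cases "V - (insert v D \<union> S) = {}")
    case True
    then have "V - (D \<union> insert v S) = {}" by auto
    with stall_move.IH v have "dominating V E D" by (meson dom_wins_imp_dominating)
    with v have "dominating V E (insert v D)" by (auto simp: dominating_def)
    with True show ?thesis by (rule dom_wins.finished)
  next
    case False
    have "dom_wins V E (insert v D) (insert u S) True" if u: "u \<in> V - (insert v D \<union> S)" for u
      using stall_move.IH u v by auto
    with False show ?thesis by (simp add: dom_wins.stall_move)
  qed
  obtain u where "u \<in> V - (D \<union> S)" using stall_move.hyps(1) by blast
  with after_v have "dom_wins V E D S True" by (meson dom_wins.dom_move)
  with after_v show ?case by simp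
qed

corollary dom_wins_first_if_second: "dom_wins V E D S False \<Longrightarrow> dom_wins V E D S True"
  using dom_wins_insert_and_move_first by blast

definition safe_side :: "'a set \<Rightarrow> 'a set \<Rightarrow> 'a set \<Rightarrow> bool" where
  "safe_side X D S \<longleftrightarrow> D \<inter> X \<noteq> {} \<or> S \<inter> X = {}"

definition threatened_side :: "'a set \<Rightarrow> 'a set \<Rightarrow> 'a set \<Rightarrow> bool" where
  "threatened_side X D S \<longleftrightarrow> D \<inter> X = {} \<and> S \<inter> X \<noteq> {} \<and> X - (D \<union> S) \<noteq> {}"

definition two_sides_inv :: "'a set \<Rightarrow> 'a set \<Rightarrow> 'a set \<Rightarrow> 'a set \<Rightarrow> 'a set \<Rightarrow> bool \<Rightarrow> bool" where
  "two_sides_inv V X Y D S b \<longleftrightarrow> D \<subseteq> V \<and>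
     (if b then (safe_side X D S \<or> threatened_side X D S) \<and> (safe_side Y D S \<or> threatened_side Y D S)
        \<and> (safe_side X D S \<or> safe_side Y D S)
      else safe_side X D S \<and> safe_side Y D S)"

lemma safe_side_staller_move:
  assumes "safe_side X D S" and "2 \<le> card X"
  shows "safe_side X D (insert v S) \<or> threatened_side X D (insert v S)"
proof (cases "D \<inter> X = {} \<and> v \<in> X")
  case True
  have "\<not> X \<subseteq> {v}" using assms(2) card_mono[of "{v}" X] by auto
  then obtain w where "w \<in> X" "w \<noteq> v" by blast
  with True assms(1) show ?thesis by (auto simp: safe_side_def threatened_side_def)
next
  case False
  with assms(1) show ?thesis by (auto simp: safe_side_def)
qed

lemma two_sides_inv_staller_move:
  assumes "X \<inter> Y = {}" "2 \<le> card X" "2 \<le> card Y" "two_sides_inv V X Y D S False"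
  shows "two_sides_inv V X Y D (insert v S) True"
proof -
  have "safe_side Z D (insert v S)" if "safe_side Z D S" "v \<notin> Z" for Z
    using that by (auto simp: safe_side_def)
  moreover have "v \<notin> X \<or> v \<notin> Y" using \<open>X \<inter> Y = {}\<close> by blast
  ultimately show ?thesis
    using assms safe_side_staller_move[of X D S v] safe_side_staller_move[of Y D S v]
    by (auto simp: two_sides_inv_def)
qed

lemma two_sides_inv_dominator_move:
  assumes "X \<subseteq> V" "Y \<subseteq> V" "two_sides_inv V X Y D S True" "V - (D \<union> S) \<noteq> {}"
  shows "\<exists>v\<in>V - (D \<union> S). two_sides_inv V X Y (insert v D) S False"
proof -
  have grow: "safe_side Z (insert v D) S" if "safe_side Z D S \<or> v \<in> Z" for Z v
    using that by (auto simp: safe_side_def)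
  have not_both: "\<not> (threatened_side Z D S \<and> safe_side Z D S)" for Z
    by (auto simp: safe_side_def threatened_side_def)
  consider (X) "threatened_side X D S" | (Y) "threatened_side Y D S"
    | (neither) "safe_side X D S" "safe_side Y D S"
    using assms(3) by (auto simp: two_sides_inv_def)
  then show ?thesis
  proof cases
    case X
    then obtain v where v: "v \<in> X - (D \<union> S)" by (auto simp: threatened_side_def)
    from X assms(3) not_both have "safe_side Y D S" by (auto simp: two_sides_inv_def)
    with v grow have "safe_side X (insert v D) S" "safe_side Y (insert v D) S" by blast+
    with v assms(1,3) show ?thesis by (auto simp: two_sides_inv_def)
  next
    case Y
    then obtain v where v: "v \<in> Y - (D \<union> S)" by (auto simp: threatened_side_def)
    from Y assms(3) not_both have "safe_side X D S" by (auto simp: two_sides_inv_def)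
    with v grow have "safe_side X (insert v D) S" "safe_side Y (insert v D) S" by blast+
    with v assms(2,3) show ?thesis by (auto simp: two_sides_inv_def)
  next
    case neither
    from assms(4) obtain v where v: "v \<in> V - (D \<union> S)" by blast
    with neither grow have "safe_side X (insert v D) S" "safe_side Y (insert v D) S" by blast+
    with v assms(3) show ?thesis by (auto simp: two_sides_inv_def)
  qed
qed

lemma two_sides_inv_meets_sides:
  assumes "two_sides_inv V X Y D S b" "V - (D \<union> S) = {}" "X \<subseteq> V" "Y \<subseteq> V" "X \<noteq> {}" "Y \<noteq> {}"
  shows "D \<inter> X \<noteq> {}" and "D \<inter> Y \<noteq> {}"
proof -
  have meets: "D \<inter> Z \<noteq> {}" if "safe_side Z D S \<or> threatened_side Z D S" "Z \<subseteq> V" "Z \<noteq> {}" for Z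
    using that assms(2) by (auto simp: safe_side_def threatened_side_def)
  from assms(1) have "safe_side X D S \<or> threatened_side X D S" "safe_side Y D S \<or> threatened_side Y D S"
    by (cases b; simp add: two_sides_inv_def)+
  with assms(3-6) show "D \<inter> X \<noteq> {}" and "D \<inter> Y \<noteq> {}"
    by (simp_all add: meets)
qed

lemma dom_wins_if_meeting_two_sides_dominates:
  assumes "finite V" "X \<subseteq> V" "Y \<subseteq> V" "X \<inter> Y = {}" "2 \<le> card X" "2 \<le> card Y"
    and meets_both: "\<And>D. D \<subseteq> V \<Longrightarrow> D \<inter> X \<noteq> {} \<Longrightarrow> D \<inter> Y \<noteq> {} \<Longrightarrow> dominating V E D"
  shows "dom_wins V E {} {} b"
proof (rule dom_wins_by_invariant[where P = "two_sides_inv V X Y"])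
  have "X \<noteq> {}" "Y \<noteq> {}" using assms(5,6) by auto
  show "dominating V E D" if inv: "two_sides_inv V X Y D S b" and "V - (D \<union> S) = {}" for D S b
  proof (rule meets_both)
    show "D \<subseteq> V" using inv by (simp add: two_sides_inv_def)
    show "D \<inter> X \<noteq> {}" "D \<inter> Y \<noteq> {}"
      using two_sides_inv_meets_sides[OF that assms(2,3) \<open>X \<noteq> {}\<close> \<open>Y \<noteq> {}\<close>] by simp_all
  qed
  show "\<exists>v\<in>V - (D \<union> S). two_sides_inv V X Y (insert v D) S False"
    if "two_sides_inv V X Y D S True" "V - (D \<union> S) \<noteq> {}" for D S
    using two_sides_inv_dominator_move[OF assms(2,3) that] .
  show "two_sides_inv V X Y D (insert v S) True" if "two_sides_inv V X Y D S False" for D S v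
    using two_sides_inv_staller_move[OF assms(4-6) that] .
  show "two_sides_inv V X Y {} {} b"
    by (simp add: two_sides_inv_def safe_side_def)
qed (fact \<open>finite V\<close>)

lemma join_edges_commute: "join_edges V\<^sub>1 E\<^sub>1 V\<^sub>2 E\<^sub>2 = join_edges V\<^sub>2 E\<^sub>2 V\<^sub>1 E\<^sub>1"
  by (auto simp: join_edges_def fun_eq_iff)

lemma dominating_join_if_meets_both:
  "D \<subseteq> V\<^sub>1 \<union> V\<^sub>2 \<Longrightarrow> D \<inter> V\<^sub>1 \<noteq> {} \<Longrightarrow> D \<inter> V\<^sub>2 \<noteq> {}
    \<Longrightarrow> dominating (V\<^sub>1 \<union> V\<^sub>2) (join_edges V\<^sub>1 E\<^sub>1 V\<^sub>2 E\<^sub>2) D"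
  unfolding dominating_def join_edges_def by blast

lemma join_edges_right_side:
  assumes "graph V\<^sub>1 E\<^sub>1" "V\<^sub>1 \<inter> V\<^sub>2 = {}" "u \<in> V\<^sub>2" "v \<in> V\<^sub>2" "join_edges V\<^sub>1 E\<^sub>1 V\<^sub>2 E\<^sub>2 u v"
  shows "E\<^sub>2 u v"
  using assms unfolding graph_def join_edges_def by blast

theorem outcome_D_join_if_card_ge_2:
  assumes "graph V\<^sub>1 E\<^sub>1" "graph V\<^sub>2 E\<^sub>2" "V\<^sub>1 \<inter> V\<^sub>2 = {}" "2 \<le> card V\<^sub>1" "2 \<le> card V\<^sub>2"
  shows "outcome_D (V\<^sub>1 \<union> V\<^sub>2) (join_edges V\<^sub>1 E\<^sub>1 V\<^sub>2 E\<^sub>2)"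
proof -
  have "finite (V\<^sub>1 \<union> V\<^sub>2)" using assms(1,2) by (simp add: graph_def)
  with assms(3-5) have "dom_wins (V\<^sub>1 \<union> V\<^sub>2) (join_edges V\<^sub>1 E\<^sub>1 V\<^sub>2 E\<^sub>2) {} {} b" for b
    by (intro dom_wins_if_meeting_two_sides_dominates dominating_join_if_meets_both) auto
  then show ?thesis by (simp add: outcome_D_def)
qed

lemma dominating_join_singleton: "dominating (insert x V) (join_edges {x} E\<^sub>1 V E\<^sub>2) {x}"
  unfolding dominating_def join_edges_def by blast

lemma dom_wins_join_singleton_dominator_center:
  assumes "graph V E\<^sub>2" "x \<in> D" "D \<subseteq> insert x V"
  shows "dom_wins (insert x V) (join_edges {x} E\<^sub>1 V E\<^sub>2) D S b"
  using assms dominating_join_singleton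
  by (intro dom_wins_if_contains_dominating[of _ _ "{x}"]) (auto simp: graph_def)

lemma dom_wins_join_singleton_staller_centerI:
  assumes "x \<notin> V" "V \<noteq> {}"
  shows "dom_wins V E\<^sub>2 D S b \<Longrightarrow> dom_wins (insert x V) (join_edges {x} E\<^sub>1 V E\<^sub>2) D (insert x S) b"
proof (induction rule: dom_wins.induct)
  case (finished D S b)
  from \<open>V \<noteq> {}\<close> finished.hyps(2) have "D \<inter> V \<noteq> {}" by (auto simp: dominating_def)
  with finished.hyps(2) have "dominating (insert x V) (join_edges {x} E\<^sub>1 V E\<^sub>2) D"
    unfolding dominating_def join_edges_def by blast
  moreover from finished.hyps(1) have "insert x V - (D \<union> insert x S) = {}" by auto
  ultimately show ?case by (rule dom_wins.finished[rotated])
next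
  case (dom_move v D S)
  with \<open>x \<notin> V\<close> show ?case by (intro dom_wins.dom_move[of v]) auto
next
  case (stall_move D S)
  have free: "insert x V - (D \<union> insert x S) = V - (D \<union> S)" using \<open>x \<notin> V\<close> by auto
  with stall_move show ?case by (intro dom_wins.stall_move) (auto simp: insert_commute)
qed

lemma dom_wins_join_singleton_staller_centerD:
  assumes "graph {x} E\<^sub>1" "x \<notin> V"
  shows "dom_wins (insert x V) (join_edges {x} E\<^sub>1 V E\<^sub>2) D S b \<Longrightarrow> x \<in> S \<Longrightarrow> D \<subseteq> V
    \<Longrightarrow> dom_wins V E\<^sub>2 D (S - {x}) b"
proof (induction rule: dom_wins.induct)
  case (finished D S b)
  have "v \<in> D \<or> (\<exists>u\<in>D. E\<^sub>2 u v)" if "v \<in> V" for v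
    using finished.hyps(2) finished.prems(2) that
      join_edges_right_side[OF assms(1), of V] \<open>x \<notin> V\<close>
    unfolding dominating_def by blast
  with finished.prems(2) have "dominating V E\<^sub>2 D" by (simp add: dominating_def)
  moreover from finished.hyps(1) \<open>x \<notin> V\<close> have "V - (D \<union> (S - {x})) = {}" by auto
  ultimately show ?case by (rule dom_wins.finished[rotated])
next
  case (dom_move v D S)
  then have "v \<in> V - (D \<union> (S - {x}))" by auto
  with dom_move show ?case by (intro dom_wins.dom_move[of v]) auto
next
  case (stall_move D S)
  have free: "insert x V - (D \<union> S) = V - (D \<union> (S - {x}))" using stall_move.prems \<open>x \<notin> V\<close> by auto
  have "insert v S - {x} = insert v (S - {x})" if "v \<in> V" for v using \<open>x \<notin> V\<close> that by auto
  with stall_move free show ?case by (intro dom_wins.stall_move) auto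
qed

lemma dom_wins_join_singleton_second_iff:
  assumes "graph {x} E\<^sub>1" "graph V E\<^sub>2" "x \<notin> V" "V \<noteq> {}"
  shows "dom_wins (insert x V) (join_edges {x} E\<^sub>1 V E\<^sub>2) {} {} False \<longleftrightarrow> dom_wins V E\<^sub>2 {} {} True"
proof
  assume "dom_wins (insert x V) (join_edges {x} E\<^sub>1 V E\<^sub>2) {} {} False"
  then have "dom_wins (insert x V) (join_edges {x} E\<^sub>1 V E\<^sub>2) {} {x} True"
    by (cases rule: dom_wins.cases) auto
  from dom_wins_join_singleton_staller_centerD[OF assms(1,3) this] show "dom_wins V E\<^sub>2 {} {} True"
    by simp
next
  assume first: "dom_wins V E\<^sub>2 {} {} True"
  have "dom_wins (insert x V) (join_edges {x} E\<^sub>1 V E\<^sub>2) {} {v} True" if "v \<in> insert x V" for v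
  proof (cases "v = x")
    case True
    with dom_wins_join_singleton_staller_centerI[OF assms(3,4) first] show ?thesis by simp
  next
    case False
    with that have "dom_wins (insert x V) (join_edges {x} E\<^sub>1 V E\<^sub>2) {x} {v} False"
      by (intro dom_wins_join_singleton_dominator_center[OF assms(2)]) auto
    with False show ?thesis by (intro dom_wins.dom_move[of x]) auto
  qed
  then show "dom_wins (insert x V) (join_edges {x} E\<^sub>1 V E\<^sub>2) {} {} False"
    by (intro dom_wins.stall_move) auto
qed

theorem outcome_join_singleton:
  assumes "graph V\<^sub>1 E\<^sub>1" "graph V\<^sub>2 E\<^sub>2" "card V\<^sub>1 = 1" "V\<^sub>1 \<inter> V\<^sub>2 = {}" "V\<^sub>2 \<noteq> {}"
  shows "outcome_N (V\<^sub>1 \<union> V\<^sub>2) (join_edges V\<^sub>1 E\<^sub>1 V\<^sub>2 E\<^sub>2) \<longleftrightarrow> outcome_S V\<^sub>2 E\<^sub>2"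
    and "outcome_D (V\<^sub>1 \<union> V\<^sub>2) (join_edges V\<^sub>1 E\<^sub>1 V\<^sub>2 E\<^sub>2) \<longleftrightarrow> \<not> outcome_S V\<^sub>2 E\<^sub>2"
proof -
  obtain x where x: "V\<^sub>1 = {x}" using \<open>card V\<^sub>1 = 1\<close> by (rule card_1_singletonE)
  with assms have "x \<notin> V\<^sub>2" and "graph {x} E\<^sub>1" by auto
  note second = dom_wins_join_singleton_second_iff[OF \<open>graph {x} E\<^sub>1\<close> assms(2) \<open>x \<notin> V\<^sub>2\<close> assms(5)]
  have "dom_wins (insert x V\<^sub>2) (join_edges {x} E\<^sub>1 V\<^sub>2 E\<^sub>2) {x} {} False"
    using assms(2) by (rule dom_wins_join_singleton_dominator_center) auto
  with \<open>x \<notin> V\<^sub>2\<close> have first: "dom_wins (insert x V\<^sub>2) (join_edges {x} E\<^sub>1 V\<^sub>2 E\<^sub>2) {} {} True"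
    by (intro dom_wins.dom_move[of x]) auto
  have "outcome_S V\<^sub>2 E\<^sub>2 \<longleftrightarrow> \<not> dom_wins V\<^sub>2 E\<^sub>2 {} {} True"
    using dom_wins_first_if_second[of V\<^sub>2 E\<^sub>2 "{}" "{}"] by (auto simp: outcome_S_def)
  with first second x show "outcome_N (V\<^sub>1 \<union> V\<^sub>2) (join_edges V\<^sub>1 E\<^sub>1 V\<^sub>2 E\<^sub>2) \<longleftrightarrow> outcome_S V\<^sub>2 E\<^sub>2"
    and "outcome_D (V\<^sub>1 \<union> V\<^sub>2) (join_edges V\<^sub>1 E\<^sub>1 V\<^sub>2 E\<^sub>2) \<longleftrightarrow> \<not> outcome_S V\<^sub>2 E\<^sub>2"
    by (simp_all add: outcome_N_def outcome_D_def)
qed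

theorem theorem5:
  fixes V1 V2 :: "'a set" and E1 E2 :: "'a \<Rightarrow> 'a \<Rightarrow> bool"
  assumes "graph V1 E1" and "graph V2 E2"
    and "V1 \<noteq> {}" and "V2 \<noteq> {}" and "V1 \<inter> V2 = {}"
  shows "(((card V1 = 1 \<and> outcome_S V2 E2) \<or> (card V2 = 1 \<and> outcome_S V1 E1))
           \<longrightarrow> outcome_N (V1 \<union> V2) (join_edges V1 E1 V2 E2))
       \<and> (\<not> ((card V1 = 1 \<and> outcome_S V2 E2) \<or> (card V2 = 1 \<and> outcome_S V1 E1))
           \<longrightarrow> outcome_D (V1 \<union> V2) (join_edges V1 E1 V2 E2))"
proof -
  let ?J = "join_edges V1 E1 V2 E2"
  have left: "card V1 = 1 \<Longrightarrow> (outcome_N (V1 \<union> V2) ?J \<longleftrightarrow> outcome_S V2 E2)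
      \<and> (outcome_D (V1 \<union> V2) ?J \<longleftrightarrow> \<not> outcome_S V2 E2)"
    using outcome_join_singleton[OF assms(1,2) _ assms(5,4)] by simp
  have right: "card V2 = 1 \<Longrightarrow> (outcome_N (V1 \<union> V2) ?J \<longleftrightarrow> outcome_S V1 E1)
      \<and> (outcome_D (V1 \<union> V2) ?J \<longleftrightarrow> \<not> outcome_S V1 E1)"
    using outcome_join_singleton[OF assms(2,1) _ _ assms(3)] assms(5)
    by (simp add: join_edges_commute Un_commute Int_commute)
  have "card V1 \<noteq> 0" "card V2 \<noteq> 0"
    using assms(1-4) by (simp_all add: graph_def)
  then consider "card V1 = 1" | "card V2 = 1" | "2 \<le> card V1" "2 \<le> card V2" by linarith
  then show ?thesis
  proof cases
    case 1
    with left right show ?thesis by auto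
  next
    case 2
    with left right show ?thesis by auto
  next
    case 3
    with outcome_D_join_if_card_ge_2[OF assms(1,2,5)] show ?thesis by auto
  qed
qed

end
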